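(* Let $n,m$ be positive integers. Every winning sequence of moves $y_1,\dots,y_N$ in the $(n,m)$-game has length $N\ge m^n-1$; equivalently, no sequence of fewer than $m^n-1$ moves is winning.
   Context: The $(n,m)$-game: $n$ counters at positions $1,\dots,n$ (vertices in cyclic order of a regular $n$-gon table), each showing an element of $\mathbb{Z}_m$; a configuration is a vector in $\mathbb{Z}_m^n$, initially arbitrary and unknown. Each turn the player chooses a move $y\in\mathbb{Z}_m^n$ added coordinatewise, then the table is rotated by an adversarially chosen $k\in\mathbb{Z}_n$ (possibly $k=0$), replacing $x$ by $x'$ with $x'_{i+k}=x_i$ (indices mod $n$). The player wins if at some moment (including initially) all counters show $0$. A strategy is a finite sequence of moves; it is winning if it forces the zero configuration at some time for every initial configuration and every choice of rotations. *)

theory Defs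
  imports Main
begin

text \<open>Counters are indexed by positions 0,...,n-1 (position i+1 of the paper is index i);
a configuration in Z_m^n is a function nat => nat with values < m on positions < n
and value 0 outside.\<close>

definition config :: "nat \<Rightarrow> nat \<Rightarrow> (nat \<Rightarrow> nat) \<Rightarrow> bool" where
  "config n m x \<longleftrightarrow> (\<forall>i. (i < n \<longrightarrow> x i < m) \<and> (n \<le> i \<longrightarrow> x i = 0))"

definition add_move :: "nat \<Rightarrow> nat \<Rightarrow> (nat \<Rightarrow> nat) \<Rightarrow> (nat \<Rightarrow> nat) \<Rightarrow> (nat \<Rightarrow> nat)" where
  "add_move n m x y = (\<lambda>i. if i < n then (x i + y i) mod m else 0)"

text \<open>Rotation by k in Z_n: the result x' satisfies x'_{(i+k) mod n} = x_i.\<close>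
definition rotate_cfg :: "nat \<Rightarrow> nat \<Rightarrow> (nat \<Rightarrow> nat) \<Rightarrow> (nat \<Rightarrow> nat)" where
  "rotate_cfg n k x = (\<lambda>j. if j < n then x ((j + n - k mod n) mod n) else 0)"

primrec play :: "nat \<Rightarrow> nat \<Rightarrow> (nat \<Rightarrow> nat) \<Rightarrow> (nat \<Rightarrow> nat) list \<Rightarrow> (nat \<Rightarrow> nat) \<Rightarrow> nat \<Rightarrow> (nat \<Rightarrow> nat)" where
  "play n m x ys ks 0 = x"
| "play n m x ys ks (Suc t) = rotate_cfg n (ks t) (add_move n m (play n m x ys ks t) (ys ! t))"

definition winning :: "nat \<Rightarrow> nat \<Rightarrow> (nat \<Rightarrow> nat) list \<Rightarrow> bool" where
  "winning n m ys \<longleftrightarrow> (\<forall>y \<in> set ys. config n m y) \<and>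
     (\<forall>x ks. config n m x \<longrightarrow> (\<exists>t \<le> length ys. play n m x ys ks t = (\<lambda>_. 0)))"

end

theory Submission
  imports Defs
begin

text \<open>If the table is never rotated, each move acts as a bijection of the configuration space,
so for a fixed time t at most one initial configuration is zero after t turns. A winning
sequence of N moves therefore assigns to every one of the m^n configurations a distinct time
in 0..N at which it is zero, whence m^n \<le> N + 1.\<close>

lemma card_config:
  assumes "0 < m"
  shows "card {x. config n m x} = m ^ n"
proof -
  let ?L = "{xs. set xs \<subseteq> {..<m} \<and> length xs = n}"
  let ?extend = "\<lambda>xs i. if i < n then xs ! i else (0::nat)"
  have inj: "inj_on ?extend ?L"
  proof (rule inj_onI)
    fix xs zs assume xs: "xs \<in> ?L" and zs: "zs \<in> ?L" and eq: "?extend xs = ?extend zs"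
    show "xs = zs"
    proof (rule nth_equalityI)
      show "length xs = length zs" using xs zs by simp
      show "xs ! i = zs ! i" if "i < length xs" for i
        using that xs fun_cong[OF eq, of i] by simp
    qed
  qed
  have image: "?extend ` ?L = {x. config n m x}"
  proof
    show "?extend ` ?L \<subseteq> {x. config n m x}"
      using nth_mem by (fastforce simp: config_def)
    show "{x. config n m x} \<subseteq> ?extend ` ?L"
    proof
      fix x assume "x \<in> {x. config n m x}"
      then have "x = ?extend (map x [0..<n])" and "map x [0..<n] \<in> ?L"
        by (auto simp: config_def fun_eq_iff)
      then show "x \<in> ?extend ` ?L" by blast
    qed
  qed
  have "card {x. config n m x} = card ?L"
    using card_image[OF inj] image by simp
  also have "\<dots> = m ^ n"
    using card_lists_length_eq[of "{..<m}" n] by simp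
  finally show ?thesis .
qed

lemma config_add_move: "0 < m \<Longrightarrow> config n m (add_move n m x y)"
  by (auto simp: config_def add_move_def)

lemma rotate_cfg_0: "config n m x \<Longrightarrow> rotate_cfg n 0 x = x"
  by (auto simp: rotate_cfg_def config_def fun_eq_iff)

lemma add_move_right_cancel:
  assumes "config n m x" "config n m x'" and "add_move n m x y = add_move n m x' y"
  shows "x = x'"
proof
  fix i
  show "x i = x' i"
  proof (cases "i < n")
    case True
    then have "(x i + y i) mod m = (x' i + y i) mod m"
      using fun_cong[OF assms(3), of i] by (simp add: add_move_def)
    then have "x i mod m = x' i mod m"
      by (simp add: nat_mod_eq_iff)
    with True assms(1,2) show ?thesis
      by (simp add: config_def)
  next
    case False
    with assms(1,2) show ?thesis by (simp add: config_def)
  qed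
qed

lemma play_unrotated_step:
  "0 < m \<Longrightarrow> play n m x ys (\<lambda>_. 0) (Suc t) = add_move n m (play n m x ys (\<lambda>_. 0) t) (ys ! t)"
  by (simp add: rotate_cfg_0[OF config_add_move])

lemma config_play_unrotated:
  assumes "0 < m" "config n m x"
  shows "config n m (play n m x ys (\<lambda>_. 0) t)"
  using assms by (cases t) (simp_all del: play.simps(2) add: play_unrotated_step config_add_move)

lemma play_unrotated_inj:
  assumes "0 < m" "config n m x" "config n m x'"
  shows "play n m x ys (\<lambda>_. 0) t = play n m x' ys (\<lambda>_. 0) t \<Longrightarrow> x = x'"
proof (induction t)
  case 0
  then show ?case by simp
next
  case (Suc t)
  then have "add_move n m (play n m x ys (\<lambda>_. 0) t) (ys ! t)
      = add_move n m (play n m x' ys (\<lambda>_. 0) t) (ys ! t)"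
    by (simp only: play_unrotated_step[OF assms(1)])
  then have "play n m x ys (\<lambda>_. 0) t = play n m x' ys (\<lambda>_. 0) t"
    using add_move_right_cancel config_play_unrotated assms by blast
  then show ?case
    by (rule Suc.IH)
qed

lemma card_le_Suc_if_distinct_times:
  assumes some_time: "\<And>x. x \<in> A \<Longrightarrow> \<exists>t \<le> N. P x t"
    and distinct: "\<And>x x' t. x \<in> A \<Longrightarrow> x' \<in> A \<Longrightarrow> P x t \<Longrightarrow> P x' t \<Longrightarrow> x = x'"
  shows "card A \<le> Suc N"
proof -
  define time where "time x = (SOME t. t \<le> N \<and> P x t)" for x
  have time: "time x \<le> N \<and> P x (time x)" if "x \<in> A" for x
    unfolding time_def using some_time[OF that] by (rule someI_ex)
  have "inj_on time A"
    by (rule inj_onI) (metis time distinct)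
  moreover have "time ` A \<subseteq> {..N}"
    using time by auto
  ultimately have "card A \<le> card {..N}"
    by (rule card_inj_on_le) simp
  then show ?thesis
    by simp
qed

theorem theorem5p1:
  fixes n m :: nat and ys :: "(nat \<Rightarrow> nat) list"
  assumes "0 < n" and "0 < m" and "winning n m ys"
  shows "m ^ n - 1 \<le> length ys"
proof -
  have "card {x. config n m x} \<le> Suc (length ys)"
  proof (rule card_le_Suc_if_distinct_times)
    show "\<exists>t \<le> length ys. play n m x ys (\<lambda>_. 0) t = (\<lambda>_. 0)" if "x \<in> {x. config n m x}" for x
      using assms(3) that unfolding winning_def by blast
    show "x = x'" if "x \<in> {x. config n m x}" "x' \<in> {x. config n m x}"
      and "play n m x ys (\<lambda>_. 0) t = (\<lambda>_. 0)" "play n m x' ys (\<lambda>_. 0) t = (\<lambda>_. 0)" for x x' t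
      by (rule play_unrotated_inj[OF assms(2), where ys = ys and t = t]) (use that in auto)
  qed
  then show ?thesis
    using card_config[OF assms(2)] by simp
qed

end
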